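(* Let $T$ be a square-integrable real random variable and $X=(X_s)_{s\in\mathbb{S}}$ a finite family of random variables (features), and let $f$ be a measurable function with $f(X)=E[T\mid X]$ almost surely. For $S\subseteq\mathbb{S}$ write $X_S=(X_s)_{s\in S}$ and define, for a realisation $(x,t)$ of $(X,T)$, the value function $w_{f(x),t}(S)=\bigl(t-v_{f(x)}(S)\bigr)^2$, where $v_{f(x)}(S)=E[f(X)\mid X_s=x_s,\ s\in S]$, and set $\varphi_j(f,x,t,S)=w_{f(x),t}(S\cup\{j\})-w_{f(x),t}(S)$. Let $\pi$ be a permutation of $\mathbb{S}$, let $j\in\mathbb{S}$ and $R_j=\{i:\pi(i)<\pi(j)\}$. Then $$-E\bigl[\varphi_j(f,X,T,R_j)\bigr]=L_T(X_j)+W_T(X_j;X_{R_j}),$$ where for families of random variables $A,B$: $L_T(A)=\sigma^2(T)-\sigma^2\bigl(T-E[T\mid A]\bigr)$ and $W_T(A;B)=L_T(A,B)-L_T(A)-L_T(B)$ (with $L_T$ of the empty family equal to $0$).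
   Context: $\sigma^2$ denotes variance. $L_T(A,B)$ means $L_T$ applied to the combined family of variables $A$ and $B$. The paper's analysis assumes the model equals (approximately) the conditional expectation of the target, $f(X)\approx E[T\mid X]$, as obtained from mean-squared-error regression. *)

theory Defs
  imports "HOL-Probability.Probability"
begin

definition gen_sa :: "'a measure \<Rightarrow> ('s \<Rightarrow> 'a \<Rightarrow> 'b) \<Rightarrow> ('s \<Rightarrow> 'b measure) \<Rightarrow> 's set \<Rightarrow> 'a measure" where
  "gen_sa M X N S = sigma (space M) (\<Union>s\<in>S. {X s -` A \<inter> space M | A. A \<in> sets (N s)})"

definition cexp :: "'a measure \<Rightarrow> ('s \<Rightarrow> 'a \<Rightarrow> 'b) \<Rightarrow> ('s \<Rightarrow> 'b measure) \<Rightarrow> 's set \<Rightarrow> ('a \<Rightarrow> real) \<Rightarrow> 'a \<Rightarrow> real" where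
  "cexp M X N S Y = real_cond_exp M (gen_sa M X N S) Y"

definition var :: "'a measure \<Rightarrow> ('a \<Rightarrow> real) \<Rightarrow> real" where
  "var M Y = (LINT \<omega>|M. (Y \<omega> - (LINT \<eta>|M. Y \<eta>))\<^sup>2)"

definition LT :: "'a measure \<Rightarrow> ('s \<Rightarrow> 'a \<Rightarrow> 'b) \<Rightarrow> ('s \<Rightarrow> 'b measure) \<Rightarrow> ('a \<Rightarrow> real) \<Rightarrow> 's set \<Rightarrow> real" where
  "LT M X N T S = (if S = {} then 0 else var M T - var M (\<lambda>\<omega>. T \<omega> - cexp M X N S T \<omega>))"

definition WT :: "'a measure \<Rightarrow> ('s \<Rightarrow> 'a \<Rightarrow> 'b) \<Rightarrow> ('s \<Rightarrow> 'b measure) \<Rightarrow> ('a \<Rightarrow> real) \<Rightarrow> 's set \<Rightarrow> 's set \<Rightarrow> real" where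
  "WT M X N T A B = LT M X N T (A \<union> B) - LT M X N T A - LT M X N T B"

definition Xvec :: "'s set \<Rightarrow> ('s \<Rightarrow> 'a \<Rightarrow> 'b) \<Rightarrow> 'a \<Rightarrow> ('s \<Rightarrow> 'b)" where
  "Xvec SS X \<omega> = restrict (\<lambda>s. X s \<omega>) SS"

text \<open>Value function v_{f(x)}(S) = E[f(X) | X_S = x_S], evaluated at x = X(omega).\<close>
definition vfun :: "'a measure \<Rightarrow> 's set \<Rightarrow> ('s \<Rightarrow> 'a \<Rightarrow> 'b) \<Rightarrow> ('s \<Rightarrow> 'b measure) \<Rightarrow> (('s \<Rightarrow> 'b) \<Rightarrow> real) \<Rightarrow> 's set \<Rightarrow> 'a \<Rightarrow> real" where
  "vfun M SS X N f S = cexp M X N S (\<lambda>\<omega>. f (Xvec SS X \<omega>))"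

text \<open>w_{f(x),t}(S) = (t - v_{f(x)}(S))^2 at (x,t) = (X(omega), T(omega)).\<close>
definition wfun :: "'a measure \<Rightarrow> 's set \<Rightarrow> ('s \<Rightarrow> 'a \<Rightarrow> 'b) \<Rightarrow> ('s \<Rightarrow> 'b measure) \<Rightarrow> (('s \<Rightarrow> 'b) \<Rightarrow> real) \<Rightarrow> ('a \<Rightarrow> real) \<Rightarrow> 's set \<Rightarrow> 'a \<Rightarrow> real" where
  "wfun M SS X N f T S \<omega> = (T \<omega> - vfun M SS X N f S \<omega>)\<^sup>2"

definition phi :: "'a measure \<Rightarrow> 's set \<Rightarrow> ('s \<Rightarrow> 'a \<Rightarrow> 'b) \<Rightarrow> ('s \<Rightarrow> 'b measure) \<Rightarrow> (('s \<Rightarrow> 'b) \<Rightarrow> real) \<Rightarrow> ('a \<Rightarrow> real) \<Rightarrow> 's \<Rightarrow> 's set \<Rightarrow> 'a \<Rightarrow> real" where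
  "phi M SS X N f T j S \<omega> = wfun M SS X N f T (S \<union> {j}) \<omega> - wfun M SS X N f T S \<omega>"

end

theory Submission
  imports Defs
begin

text \<open>Since \<open>f(X) = E[T | X]\<close>, the tower property turns the value function into
  \<open>v\<^sub>f(S) = E[T | X\<^sub>S]\<close> almost surely, so \<open>E[w(S)]\<close> is the mean squared residual
  \<open>E[(T - E[T | X\<^sub>S])\<^sup>2]\<close>. The residual has mean zero, hence this is its variance, i.e.
  \<open>\<sigma>\<^sup>2(T) - L\<^sub>T(X\<^sub>S)\<close>; for \<open>S = {}\<close> the conditional expectation is the constant \<open>E[T]\<close> and
  the residual variance is \<open>\<sigma>\<^sup>2(T)\<close>, matching \<open>L\<^sub>T(\<emptyset>) = 0\<close>. Therefore
  \<open>-E[\<phi>\<^sub>j(R)] = L\<^sub>T(R \<union> {j}) - L\<^sub>T(R)\<close>, which is \<open>L\<^sub>T(X\<^sub>j) + W\<^sub>T(X\<^sub>j; X\<^sub>R)\<close> by definition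
  of \<open>W\<^sub>T\<close>.\<close>

lemma space_gen_sa [simp]: "space (gen_sa M X N S) = space M"
  unfolding gen_sa_def by (rule space_measure_of) auto

lemma sets_gen_sa:
  "sets (gen_sa M X N S) = sigma_sets (space M) (\<Union>s\<in>S. {X s -` A \<inter> space M | A. A \<in> sets (N s)})"
  unfolding gen_sa_def by (rule sets_measure_of) auto

lemma sets_gen_sa_empty: "sets (gen_sa M X N {}) = {{}, space M}"
  by (simp add: sets_gen_sa sigma_sets_empty_eq)

lemma subalgebra_gen_sa:
  assumes "\<And>s. s \<in> S \<Longrightarrow> X s \<in> measurable M (N s)"
  shows "subalgebra M (gen_sa M X N S)"
  unfolding subalgebra_def space_gen_sa sets_gen_sa
proof (intro conjI refl sets.sigma_sets_subset)
  show "(\<Union>s\<in>S. {X s -` A \<inter> space M | A. A \<in> sets (N s)}) \<subseteq> sets M"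
    using assms by (auto intro!: measurable_sets)
qed

lemma subalgebra_gen_sa_mono:
  assumes "S \<subseteq> S'"
  shows "subalgebra (gen_sa M X N S') (gen_sa M X N S)"
  unfolding subalgebra_def space_gen_sa sets_gen_sa
  by (intro conjI refl sigma_sets_mono') (use assms in auto)

lemma measurable_Xvec:
  assumes "\<And>s. s \<in> SS \<Longrightarrow> X s \<in> measurable M (N s)"
  shows "Xvec SS X \<in> measurable M (PiM SS N)"
  unfolding Xvec_def by (rule measurable_restrict) (rule assms)

lemma (in prob_space) var_eq_variance: "var M Y = variance Y"
  by (simp add: var_def)

lemma (in finite_measure) integrable_square_diff:
  fixes g h :: "'a \<Rightarrow> real"
  assumes [measurable]: "g \<in> borel_measurable M" "h \<in> borel_measurable M"
    and "integrable M (\<lambda>x. (g x)\<^sup>2)" "integrable M (\<lambda>x. (h x)\<^sup>2)"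
  shows "integrable M (\<lambda>x. (g x - h x)\<^sup>2)"
proof (rule Bochner_Integration.integrable_bound)
  show "integrable M (\<lambda>x. 2 * (g x)\<^sup>2 + 2 * (h x)\<^sup>2)"
    using assms(3,4) by (intro Bochner_Integration.integrable_add integrable_mult_right)
  have "(a - b)\<^sup>2 \<le> 2 * a\<^sup>2 + 2 * b\<^sup>2" for a b :: real
    using zero_le_power2[of "a + b"] by (simp add: power2_eq_square algebra_simps)
  then show "AE x in M. norm ((g x - h x)\<^sup>2) \<le> norm (2 * (g x)\<^sup>2 + 2 * (h x)\<^sup>2)"
    by simp
qed measurable

lemma (in finite_measure_subalgebra) real_cond_exp_square_integrable:
  assumes [measurable]: "g \<in> borel_measurable M" and "integrable M (\<lambda>x. (g x)\<^sup>2)"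
  shows "integrable M (\<lambda>x. (real_cond_exp M F g x)\<^sup>2)"
proof (rule integrable_convex_cond_exp[where I = UNIV])
  show "integrable M g"
    using assms by (rule square_integrable_imp_integrable)
  show "convex_on UNIV (\<lambda>x::real. x\<^sup>2)"
    by (rule convex_power2)
qed (use assms(2) in simp_all)

lemma (in prob_space) real_cond_exp_trivial_subalgebra:
  assumes "subalgebra M F" "sets F = {{}, space M}" "integrable M g" "x \<in> space M"
  shows "real_cond_exp M F g x = expectation g"
proof -
  interpret F: finite_measure_subalgebra M F by unfold_locales (rule assms(1))
  define c where "c = real_cond_exp M F g"
  have space_F: "space F = space M"
    using assms(1) by (simp add: subalgebra_def)
  have "c -` {c x} \<inter> space F \<in> sets F"
    unfolding c_def by (rule measurable_sets[OF borel_measurable_cond_exp]) simp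
  moreover have "x \<in> c -` {c x} \<inter> space F"
    using assms(4) space_F by simp
  ultimately have level_set: "c -` {c x} \<inter> space M = space M"
    using assms(2) space_F by auto
  have const: "c y = c x" if "y \<in> space M" for y
    using that level_set by blast
  have "expectation g = expectation c"
    unfolding c_def by (rule F.real_cond_exp_int(2)[OF assms(3), symmetric])
  also have "\<dots> = expectation (\<lambda>_. c x)"
    by (rule Bochner_Integration.integral_cong) (simp_all add: const)
  also have "\<dots> = c x"
    using prob_space by simp
  finally show ?thesis
    by (simp add: c_def)
qed

text \<open>The residual of a conditional expectation has mean zero.\<close>
lemma (in prob_space) var_residual_cond_exp:
  assumes "subalgebra M F" "integrable M g"
  shows "var M (\<lambda>x. g x - real_cond_exp M F g x) = expectation (\<lambda>x. (g x - real_cond_exp M F g x)\<^sup>2)"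
proof -
  interpret F: finite_measure_subalgebra M F by unfold_locales (rule assms(1))
  have "expectation (\<lambda>x. g x - real_cond_exp M F g x) = 0"
    using assms(2) F.real_cond_exp_int[OF assms(2)] by simp
  then show ?thesis
    by (simp add: var_eq_variance)
qed

locale regression_model = prob_space M
  for M :: "'a measure" +
  fixes SS :: "'s set" and X :: "'s \<Rightarrow> 'a \<Rightarrow> 'b" and N :: "'s \<Rightarrow> 'b measure"
    and T :: "'a \<Rightarrow> real" and f :: "('s \<Rightarrow> 'b) \<Rightarrow> real"
  assumes T_measurable [measurable]: "T \<in> borel_measurable M"
    and T_square_integrable: "integrable M (\<lambda>\<omega>. (T \<omega>)\<^sup>2)"
    and X_measurable: "\<And>s. s \<in> SS \<Longrightarrow> X s \<in> measurable M (N s)"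
    and f_measurable: "f \<in> borel_measurable (PiM SS N)"
    and f_cond_exp: "AE \<omega> in M. f (Xvec SS X \<omega>) = cexp M X N SS T \<omega>"
begin

lemma T_integrable: "integrable M T"
  by (rule square_integrable_imp_integrable[OF T_measurable T_square_integrable])

lemma subalgebra_gen_sa_subset: "S \<subseteq> SS \<Longrightarrow> subalgebra M (gen_sa M X N S)"
  by (rule subalgebra_gen_sa) (auto intro: X_measurable)

lemma vfun_AE_eq_cexp:
  assumes "S \<subseteq> SS"
  shows "AE \<omega> in M. vfun M SS X N f S \<omega> = cexp M X N S T \<omega>"
proof -
  interpret F: finite_measure_subalgebra M "gen_sa M X N S"
    by unfold_locales (rule subalgebra_gen_sa_subset[OF assms])
  have fX_measurable: "(\<lambda>\<omega>. f (Xvec SS X \<omega>)) \<in> borel_measurable M"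
    using measurable_comp[OF measurable_Xvec[OF X_measurable] f_measurable] by (simp add: comp_def)
  have "AE \<omega> in M. vfun M SS X N f S \<omega> = real_cond_exp M (gen_sa M X N S) (cexp M X N SS T) \<omega>"
    unfolding vfun_def cexp_def
    by (rule F.real_cond_exp_cong) (use f_cond_exp fX_measurable in \<open>auto simp: cexp_def\<close>)
  moreover have "AE \<omega> in M. real_cond_exp M (gen_sa M X N S) (cexp M X N SS T) \<omega> = cexp M X N S T \<omega>"
    unfolding cexp_def
    by (rule F.real_cond_exp_nested_subalg[OF subalgebra_gen_sa_subset subalgebra_gen_sa_mono])
       (use assms T_integrable in auto)
  ultimately show ?thesis
    by auto
qed

lemma LT_eq_var_minus_residual:
  assumes "S \<subseteq> SS"
  shows "LT M X N T S = var M T - expectation (\<lambda>\<omega>. (T \<omega> - cexp M X N S T \<omega>)\<^sup>2)"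
proof (cases "S = {}")
  case True
  have "cexp M X N {} T \<omega> = expectation T" if "\<omega> \<in> space M" for \<omega>
    unfolding cexp_def
    by (rule real_cond_exp_trivial_subalgebra[OF subalgebra_gen_sa_subset sets_gen_sa_empty
          T_integrable that]) simp
  then have "expectation (\<lambda>\<omega>. (T \<omega> - cexp M X N {} T \<omega>)\<^sup>2) = var M T"
    unfolding var_def by (intro Bochner_Integration.integral_cong) simp_all
  then show ?thesis
    using True by (simp add: LT_def)
next
  case False
  then show ?thesis
    unfolding LT_def cexp_def
    using var_residual_cond_exp[OF subalgebra_gen_sa_subset[OF assms] T_integrable] by simp
qed

lemma wfun_AE_eq_residual:
  assumes "S \<subseteq> SS"
  shows "AE \<omega> in M. wfun M SS X N f T S \<omega> = (T \<omega> - cexp M X N S T \<omega>)\<^sup>2"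
  using vfun_AE_eq_cexp[OF assms] by (auto simp: wfun_def)

lemma wfun_measurable: "wfun M SS X N f T S \<in> borel_measurable M"
  unfolding wfun_def[abs_def] vfun_def cexp_def by measurable

lemma integrable_wfun:
  assumes "S \<subseteq> SS"
  shows "integrable M (wfun M SS X N f T S)"
proof -
  interpret F: finite_measure_subalgebra M "gen_sa M X N S"
    by unfold_locales (rule subalgebra_gen_sa_subset[OF assms])
  have "integrable M (\<lambda>\<omega>. (T \<omega> - cexp M X N S T \<omega>)\<^sup>2)"
    unfolding cexp_def
    by (intro integrable_square_diff F.real_cond_exp_square_integrable T_square_integrable) auto
  moreover have "(\<lambda>\<omega>. (T \<omega> - cexp M X N S T \<omega>)\<^sup>2) \<in> borel_measurable M"
    unfolding cexp_def by measurable
  ultimately show ?thesis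
    using integrable_cong_AE[OF wfun_measurable _ wfun_AE_eq_residual[OF assms]] by simp
qed

lemma integral_wfun:
  assumes "S \<subseteq> SS"
  shows "expectation (wfun M SS X N f T S) = var M T - LT M X N T S"
proof -
  have "expectation (wfun M SS X N f T S) = expectation (\<lambda>\<omega>. (T \<omega> - cexp M X N S T \<omega>)\<^sup>2)"
    by (rule integral_cong_AE[OF wfun_measurable _ wfun_AE_eq_residual[OF assms]])
       (simp add: cexp_def)
  then show ?thesis
    using LT_eq_var_minus_residual[OF assms] by simp
qed

lemma integral_phi:
  assumes "j \<in> SS" "S \<subseteq> SS"
  shows "expectation (phi M SS X N f T j S) = LT M X N T S - LT M X N T (S \<union> {j})"
proof -
  have "S \<union> {j} \<subseteq> SS"
    using assms by auto
  then show ?thesis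
    unfolding phi_def[abs_def] by (simp add: integrable_wfun integral_wfun)
qed

end

theorem proposition1:
  fixes M :: "'a measure" and SS :: "'s set" and X :: "'s \<Rightarrow> 'a \<Rightarrow> 'b"
    and N :: "'s \<Rightarrow> 'b measure" and T :: "'a \<Rightarrow> real" and f :: "('s \<Rightarrow> 'b) \<Rightarrow> real"
    and \<pi> :: "'s \<Rightarrow> nat" and j :: 's
  assumes "prob_space M"
    and "T \<in> borel_measurable M" and "integrable M (\<lambda>\<omega>. (T \<omega>)\<^sup>2)"
    and "finite SS"
    and "\<And>s. s \<in> SS \<Longrightarrow> X s \<in> measurable M (N s)"
    and "f \<in> borel_measurable (PiM SS N)"
    and "AE \<omega> in M. f (Xvec SS X \<omega>) = cexp M X N SS T \<omega>"
    and "bij_betw \<pi> SS {..<card SS}"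
    and "j \<in> SS"
  shows "- (LINT \<omega>|M. phi M SS X N f T j {i \<in> SS. \<pi> i < \<pi> j} \<omega>)
           = LT M X N T {j} + WT M X N T {j} {i \<in> SS. \<pi> i < \<pi> j}"
proof -
  interpret regression_model M SS X N T f
    using assms(1-3,5-7) by (simp add: regression_model_def regression_model_axioms_def)
  define R where "R = {i \<in> SS. \<pi> i < \<pi> j}"
  have "R \<subseteq> SS"
    by (auto simp: R_def)
  then have "- expectation (phi M SS X N f T j R) = LT M X N T (R \<union> {j}) - LT M X N T R"
    by (simp add: integral_phi[OF \<open>j \<in> SS\<close>])
  moreover have "WT M X N T {j} R = LT M X N T (R \<union> {j}) - LT M X N T {j} - LT M X N T R"
    by (simp add: WT_def)
  ultimately show ?thesis
    unfolding R_def by linarith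
qed

end
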